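(* Let $h(x)$ be a $\Sigma_{ms}$-term whose only variable (if any) is $x$, interpreted as a function on the rationals in $Q_0(\mathbf s)$. Then there exist a rational number $r$ and a $\Sigma_m$-term $g(x)$ (no sign symbol) whose only variable is $x$, such that for every rational $q>r$, $h(q)=g(q)$ (evaluated in $Q_0(\mathbf s)$ and $Q_0$ respectively).
   Context: $\Sigma_m=(0,1,+,\cdot,-,{}^{-1})$ and $\Sigma_{ms}=\Sigma_m$ extended with a unary symbol $\mathbf s$. $Q_0$ is the field of rational numbers with its usual $0,1,+,\cdot,-$ and the total inverse $q^{-1}=1/q$ for $q\neq0$, $0^{-1}=0$. $Q_0(\mathbf s)$ is $Q_0$ expanded with the sign function $\mathbf s(q)=-1$ if $q<0$, $0$ if $q=0$, $1$ if $q>0$. *)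

theory Defs
  imports Complex_Main
begin

datatype tm =
    X
  | Zero
  | One
  | Add tm tm
  | Mul tm tm
  | Neg tm
  | Inv tm
  | Sgn tm

text \<open>Evaluation in Q_0(s): rationals with total inverse (inverse 0 = 0 in Isabelle)
and sign function sgn.\<close>

fun eval :: "tm \<Rightarrow> rat \<Rightarrow> rat" where
  "eval X q = q"
| "eval Zero q = 0"
| "eval One q = 1"
| "eval (Add a b) q = eval a q + eval b q"
| "eval (Mul a b) q = eval a q * eval b q"
| "eval (Neg a) q = - eval a q"
| "eval (Inv a) q = inverse (eval a q)"
| "eval (Sgn a) q = sgn (eval a q)"

fun sign_free :: "tm \<Rightarrow> bool" where
  "sign_free X = True"
| "sign_free Zero = True"
| "sign_free One = True"
| "sign_free (Add a b) = (sign_free a \<and> sign_free b)"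
| "sign_free (Mul a b) = (sign_free a \<and> sign_free b)"
| "sign_free (Neg a) = sign_free a"
| "sign_free (Inv a) = sign_free a"
| "sign_free (Sgn a) = False"

end

theory Submission
  imports Defs "HOL-Computational_Algebra.Polynomial"
begin

(* A sign-free term denotes, for all sufficiently large q, a rational function
   p(q)/s(q) of q, and a nonzero polynomial eventually has the sign of its
   leading coefficient.  Hence sgn applied to a sign-free term is eventually
   a constant in {-1,0,1}, which is itself denoted by a sign-free term. *)

lemma poly_eventually_ge_lead_coeff:
  fixes p :: "'a :: linordered_field poly"
  assumes "lead_coeff p > 0"
  shows "eventually (\<lambda>x. poly p x \<ge> lead_coeff p) at_top"
  using assms
proof (induction p)
  case 0
  then show ?case by simp
next
  case (pCons a p)
  show ?case
  proof (cases "p = 0")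
    case True
    then show ?thesis by simp
  next
    case False
    with pCons have lc_pos: "lead_coeff p > 0" by simp
    with pCons.IH obtain n1 where n1: "\<forall>x\<ge>n1. lead_coeff p \<le> poly p x"
      by (auto simp: eventually_at_top_linorder)
    define n where "n = max n1 (1 + \<bar>a\<bar> / lead_coeff p)"
    have "lead_coeff (pCons a p) \<le> poly (pCons a p) x" if "n \<le> x" for x
    proof -
      from n1 that have lc_le: "lead_coeff p \<le> poly p x" by (auto simp: n_def)
      with lc_pos have "\<bar>a\<bar> / lead_coeff p \<ge> \<bar>a\<bar> / poly p x" and pos: "poly p x > 0"
        by (auto intro: frac_le)
      with that have "x \<ge> 1 + \<bar>a\<bar> / poly p x" by (auto simp: n_def)
      with lc_le pos False show ?thesis by (auto simp: field_simps)
    qed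
    then show ?thesis unfolding eventually_at_top_linorder by blast
  qed
qed

lemma poly_eventually_sgn_lead_coeff:
  fixes p :: "'a :: linordered_field poly"
  shows "eventually (\<lambda>x. sgn (poly p x) = sgn (lead_coeff p)) at_top"
proof (cases "lead_coeff p" "0 :: 'a" rule: linorder_cases)
  case less
  then have "lead_coeff (-p) > 0" by simp
  from poly_eventually_ge_lead_coeff[OF this] show ?thesis
  proof (rule eventually_mono)
    fix x assume "lead_coeff (-p) \<le> poly (-p) x"
    with less have "poly p x < 0" by simp
    with less show "sgn (poly p x) = sgn (lead_coeff p)" by simp
  qed
next
  case equal
  then show ?thesis by simp
next
  case greater
  from poly_eventually_ge_lead_coeff[OF this] show ?thesis
  proof (rule eventually_mono)
    fix x assume "lead_coeff p \<le> poly p x"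
    with greater have "poly p x > 0" by simp
    with greater show "sgn (poly p x) = sgn (lead_coeff p)" by simp
  qed
qed

lemma poly_eventually_nonzero:
  fixes p :: "'a :: linordered_field poly"
  assumes "p \<noteq> 0"
  shows "eventually (\<lambda>x. poly p x \<noteq> 0) at_top"
proof (rule eventually_mono[OF poly_eventually_sgn_lead_coeff[of p]])
  fix x assume "sgn (poly p x) = sgn (lead_coeff p)"
  also from assms have "sgn (lead_coeff p) \<noteq> 0" by (simp add: sgn_0_0)
  finally show "poly p x \<noteq> 0" by (metis sgn_0)
qed

lemma sign_free_eventually_rational:
  assumes "sign_free g"
  shows "\<exists>p s. s \<noteq> 0 \<and> eventually (\<lambda>q. eval g q = poly p q / poly s q) at_top"
  using assms
proof (induction g)
  case X
  show ?case by (intro exI[of _ "[:0, 1:]"] exI[of _ 1]) simp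
next
  case Zero
  show ?case by (intro exI[of _ 0] exI[of _ 1]) simp
next
  case One
  show ?case by (intro exI[of _ 1] exI[of _ 1]) simp
next
  case (Add a b)
  then obtain p1 s1 p2 s2 where nz: "s1 \<noteq> 0" "s2 \<noteq> 0"
    and ev: "eventually (\<lambda>q. eval a q = poly p1 q / poly s1 q) at_top"
            "eventually (\<lambda>q. eval b q = poly p2 q / poly s2 q) at_top" by auto
  have "eventually (\<lambda>q. eval (Add a b) q = poly (p1 * s2 + p2 * s1) q / poly (s1 * s2) q) at_top"
    using ev poly_eventually_nonzero[OF nz(1)] poly_eventually_nonzero[OF nz(2)]
    by eventually_elim (simp add: add_frac_eq)
  with nz show ?case by (intro exI[of _ "p1 * s2 + p2 * s1"] exI[of _ "s1 * s2"]) simp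
next
  case (Mul a b)
  then obtain p1 s1 p2 s2 where nz: "s1 \<noteq> 0" "s2 \<noteq> 0"
    and ev: "eventually (\<lambda>q. eval a q = poly p1 q / poly s1 q) at_top"
            "eventually (\<lambda>q. eval b q = poly p2 q / poly s2 q) at_top" by auto
  have "eventually (\<lambda>q. eval (Mul a b) q = poly (p1 * p2) q / poly (s1 * s2) q) at_top"
    using ev by eventually_elim simp
  with nz show ?case by (intro exI[of _ "p1 * p2"] exI[of _ "s1 * s2"]) simp
next
  case (Neg a)
  then obtain p s where "s \<noteq> 0" and ev: "eventually (\<lambda>q. eval a q = poly p q / poly s q) at_top"
    by auto
  have "eventually (\<lambda>q. eval (Neg a) q = poly (-p) q / poly s q) at_top"
    using ev by eventually_elim simp
  with \<open>s \<noteq> 0\<close> show ?case by (intro exI[of _ "-p"] exI[of _ s]) simp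
next
  case (Inv a)
  then obtain p s where ev: "eventually (\<lambda>q. eval a q = poly p q / poly s q) at_top"
    by auto
  have inv_ev: "eventually (\<lambda>q. eval (Inv a) q = poly s q / poly p q) at_top"
    using ev by eventually_elim (simp add: inverse_divide)
  show ?case
  proof (cases "p = 0")
    case True
    with inv_ev show ?thesis by (intro exI[of _ 0] exI[of _ 1]) simp
  next
    case False
    with inv_ev show ?thesis by (intro exI[of _ s] exI[of _ p]) simp
  qed
next
  case (Sgn a)
  then show ?case by simp
qed

lemma sign_free_eventually_sgn_const:
  assumes "sign_free g"
  shows "\<exists>c. eventually (\<lambda>q. sgn (eval g q) = sgn c) at_top"
proof -
  obtain p s where "eventually (\<lambda>q. eval g q = poly p q / poly s q) at_top"
    using sign_free_eventually_rational[OF assms] by blast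
  with poly_eventually_sgn_lead_coeff[of p] poly_eventually_sgn_lead_coeff[of s]
  have "eventually (\<lambda>q. sgn (eval g q) = sgn (lead_coeff p * lead_coeff s)) at_top"
    by eventually_elim (simp add: sgn_divide sgn_mult)
  then show ?thesis by blast
qed

definition sgn_tm :: "rat \<Rightarrow> tm" where
  "sgn_tm c = (if c > 0 then One else if c < 0 then Neg One else Zero)"

lemma sign_free_sgn_tm: "sign_free (sgn_tm c)"
  by (simp add: sgn_tm_def)

lemma eval_sgn_tm: "eval (sgn_tm c) q = sgn c"
  by (simp add: sgn_tm_def)

(* Constructors other than Sgn are congruences for eventual equality;
   an Sgn-subterm becomes the constant term for its eventual sign. *)
lemma eventually_sign_free:
  "\<exists>g. sign_free g \<and> eventually (\<lambda>q. eval h q = eval g q) at_top"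
proof (induction h)
  case X
  show ?case by (intro exI[of _ X]) simp
next
  case Zero
  show ?case by (intro exI[of _ Zero]) simp
next
  case One
  show ?case by (intro exI[of _ One]) simp
next
  case (Add a b)
  then obtain g1 g2 where "sign_free g1" "sign_free g2"
    and ev1: "eventually (\<lambda>q. eval a q = eval g1 q) at_top"
    and ev2: "eventually (\<lambda>q. eval b q = eval g2 q) at_top" by blast
  from ev1 ev2 have "eventually (\<lambda>q. eval (Add a b) q = eval (Add g1 g2) q) at_top"
    by eventually_elim simp
  with \<open>sign_free g1\<close> \<open>sign_free g2\<close> show ?case by (intro exI[of _ "Add g1 g2"]) simp
next
  case (Mul a b)
  then obtain g1 g2 where "sign_free g1" "sign_free g2"
    and ev1: "eventually (\<lambda>q. eval a q = eval g1 q) at_top"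
    and ev2: "eventually (\<lambda>q. eval b q = eval g2 q) at_top" by blast
  from ev1 ev2 have "eventually (\<lambda>q. eval (Mul a b) q = eval (Mul g1 g2) q) at_top"
    by eventually_elim simp
  with \<open>sign_free g1\<close> \<open>sign_free g2\<close> show ?case by (intro exI[of _ "Mul g1 g2"]) simp
next
  case (Neg a)
  then obtain g where "sign_free g" and ev: "eventually (\<lambda>q. eval a q = eval g q) at_top"
    by blast
  from ev have "eventually (\<lambda>q. eval (Neg a) q = eval (Neg g) q) at_top"
    by eventually_elim simp
  with \<open>sign_free g\<close> show ?case by (intro exI[of _ "Neg g"]) simp
next
  case (Inv a)
  then obtain g where "sign_free g" and ev: "eventually (\<lambda>q. eval a q = eval g q) at_top"
    by blast
  from ev have "eventually (\<lambda>q. eval (Inv a) q = eval (Inv g) q) at_top"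
    by eventually_elim simp
  with \<open>sign_free g\<close> show ?case by (intro exI[of _ "Inv g"]) simp
next
  case (Sgn a)
  then obtain g where g: "sign_free g" and ev: "eventually (\<lambda>q. eval a q = eval g q) at_top"
    by blast
  obtain c where "eventually (\<lambda>q. sgn (eval g q) = sgn c) at_top"
    using sign_free_eventually_sgn_const[OF g] by blast
  with ev have "eventually (\<lambda>q. eval (Sgn a) q = eval (sgn_tm c) q) at_top"
    by eventually_elim (simp add: eval_sgn_tm)
  then show ?case using sign_free_sgn_tm by blast
qed

theorem theorem4:
  fixes h :: tm
  shows "\<exists>(r::rat) g. sign_free g \<and> (\<forall>q::rat. q > r \<longrightarrow> eval h q = eval g q)"
proof -
  obtain g where "sign_free g" and "eventually (\<lambda>q. eval h q = eval g q) at_top"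
    using eventually_sign_free by blast
  moreover from this(2) obtain r where "\<forall>q>r. eval h q = eval g q"
    unfolding eventually_at_top_dense by blast
  ultimately show ?thesis by blast
qed

end
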